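(* Let $n\ge 6$ and let $CB_n$ be the set of chemical bicyclic graphs on $n$ vertices. Define the following subsets of $CB_n$ (in each, all $m_{i,j}$ not listed are $0$): $\beta_2$: $n_4=0,n_3=2,n_2=n-2,n_1=0$, $m_{2,3}=4$, $m_{3,3}=1$, $m_{2,2}=n-4$; $\beta_3$: $n_4=0,n_3=2,n_2=n-2,n_1=0$, $m_{2,3}=6$, $m_{2,2}=n-5$; $\beta_9$: $n_4=0,n_3=3,n_2=n-4,n_1=1$, $m_{1,2}=1$, $m_{2,3}=3$, $m_{3,3}=3$, $m_{2,2}=n-6$. Let $G_1\in\beta_2$, $G_2\in\beta_3$, $G_3\in\beta_9$, and let $G\in CB_n$ not belong to $\beta_2\cup\beta_3\cup\beta_9$. Then $SO(G_1)<SO(G_2)<SO(G_3)<SO(G)$.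
   Context: All graphs are simple and connected. A chemical graph is a graph with maximum degree at most $4$; a bicyclic graph is a connected graph with $n$ vertices and $n+1$ edges. $d_G(u)$ is the degree of $u$, $n_i$ the number of vertices of degree $i$, and $m_{i,j}$ the number of edges joining a vertex of degree $i$ to a vertex of degree $j$. The Sombor index is $SO(G)=\sum_{uv\in E(G)}\sqrt{d_G(u)^2+d_G(v)^2}$. *)

theory Defs
  imports Complex_Main
begin

definition simple_graph :: "'a set \<Rightarrow> 'a set set \<Rightarrow> bool" where
  "simple_graph V E \<longleftrightarrow> finite V \<and>
     (\<forall>e\<in>E. \<exists>u v. e = {u, v} \<and> u \<noteq> v \<and> u \<in> V \<and> v \<in> V)"

definition degree :: "'a set set \<Rightarrow> 'a \<Rightarrow> nat" where
  "degree E v = card {e \<in> E. v \<in> e}"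

definition adjacent :: "'a set set \<Rightarrow> 'a \<Rightarrow> 'a \<Rightarrow> bool" where
  "adjacent E u v \<longleftrightarrow> {u, v} \<in> E"

definition connected_graph :: "'a set \<Rightarrow> 'a set set \<Rightarrow> bool" where
  "connected_graph V E \<longleftrightarrow> V \<noteq> {} \<and> (\<forall>u\<in>V. \<forall>v\<in>V. (adjacent E)\<^sup>*\<^sup>* u v)"

text \<open>Chemical: maximum degree at most 4. Bicyclic: connected with |E| = |V| + 1.\<close>

definition chemical_bicyclic :: "nat \<Rightarrow> 'a set \<Rightarrow> 'a set set \<Rightarrow> bool" where
  "chemical_bicyclic n V E \<longleftrightarrow> simple_graph V E \<and> connected_graph V E \<and>
     card V = n \<and> card E = n + 1 \<and> (\<forall>v\<in>V. degree E v \<le> 4)"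

definition nv :: "'a set \<Rightarrow> 'a set set \<Rightarrow> nat \<Rightarrow> nat" where
  "nv V E i = card {v \<in> V. degree E v = i}"

definition me :: "'a set set \<Rightarrow> nat \<Rightarrow> nat \<Rightarrow> nat" where
  "me E i j = card {e \<in> E. \<exists>u v. e = {u, v} \<and> u \<noteq> v \<and> degree E u = i \<and> degree E v = j}"

text \<open>Sombor index: for an edge e = {u,v}, sqrt(d(u)^2 + d(v)^2) = sqrt of the sum over x in e.\<close>
definition sombor :: "'a set set \<Rightarrow> real" where
  "sombor E = (\<Sum>e\<in>E. sqrt (\<Sum>x\<in>e. (real (degree E x))\<^sup>2))"

text \<open>Only m_{i,j} with 1 \<le> i \<le> j \<le> 4 are relevant (chemical graphs, connected, n \<ge> 6).\<close>
definition m_profile :: "'a set set \<Rightarrow> (nat \<times> nat \<Rightarrow> nat) \<Rightarrow> bool" where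
  "m_profile E f \<longleftrightarrow> (\<forall>i j. 1 \<le> i \<longrightarrow> i \<le> j \<longrightarrow> j \<le> 4 \<longrightarrow> me E i j = f (i, j))"

definition beta2 :: "nat \<Rightarrow> 'a set \<Rightarrow> 'a set set \<Rightarrow> bool" where
  "beta2 n V E \<longleftrightarrow> chemical_bicyclic n V E \<and>
     nv V E 4 = 0 \<and> nv V E 3 = 2 \<and> nv V E 2 = n - 2 \<and> nv V E 1 = 0 \<and>
     m_profile E (\<lambda>p. if p = (2,3) then 4 else if p = (3,3) then 1
                       else if p = (2,2) then n - 4 else 0)"

definition beta3 :: "nat \<Rightarrow> 'a set \<Rightarrow> 'a set set \<Rightarrow> bool" where
  "beta3 n V E \<longleftrightarrow> chemical_bicyclic n V E \<and>
     nv V E 4 = 0 \<and> nv V E 3 = 2 \<and> nv V E 2 = n - 2 \<and> nv V E 1 = 0 \<and>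
     m_profile E (\<lambda>p. if p = (2,3) then 6 else if p = (2,2) then n - 5 else 0)"

definition beta9 :: "nat \<Rightarrow> 'a set \<Rightarrow> 'a set set \<Rightarrow> bool" where
  "beta9 n V E \<longleftrightarrow> chemical_bicyclic n V E \<and>
     nv V E 4 = 0 \<and> nv V E 3 = 3 \<and> nv V E 2 = n - 4 \<and> nv V E 1 = 1 \<and>
     m_profile E (\<lambda>p. if p = (1,2) then 1 else if p = (2,3) then 3
                       else if p = (3,3) then 3 else if p = (2,2) then n - 6 else 0)"

end

theory Submission
  imports Defs
begin

text \<open>
  Every edge of a chemical graph joins vertices of degrees 1 <= i <= j <= 4, so
  SO(G) is the sum of m_{i,j} sqrt(i^2 + j^2); as a bicyclic graph has n + 1 edges,
  SO(G) = 2 sqrt 2 (n + 1) + sum of m_{i,j} (sqrt(i^2 + j^2) - 2 sqrt 2).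
  In this excess only the coefficient of m_{1,2} is negative (about -0.59), while counting
  edge ends at the vertices of each degree gives n_1 = m_{1,2} + m_{1,3} + m_{1,4} and
  n_3 + 2 n_4 = n_1 + 2. A short case analysis on n_4, n_3 and m_{3,3} (with
  m_{k,k} <= C(n_k, 2)) shows that the excess exceeds sqrt 5 + 3 sqrt 13 - 5 sqrt 2, the excess
  of beta_9, unless n_4 = 0 and n_3 = 2, which forces beta_2 or beta_3, or G has the degree
  profile of beta_9. The excesses of beta_2 and beta_3 are 4 sqrt 13 - 7 sqrt 2 and
  6 sqrt 13 - 12 sqrt 2.
\<close>

lemma simple_graph_finite_edges:
  assumes "simple_graph V E"
  shows "finite E"
proof -
  have "E \<subseteq> Pow V" "finite V" using assms by (auto simp: simple_graph_def)
  then show ?thesis by (meson finite_Pow_iff finite_subset)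
qed

lemma simple_graph_edgeE:
  assumes "simple_graph V E" "e \<in> E"
  obtains u v where "e = {u, v}" "u \<noteq> v" "u \<in> V" "v \<in> V"
  using assms by (auto simp: simple_graph_def)

lemma simple_graph_edge_subset: "simple_graph V E \<Longrightarrow> e \<in> E \<Longrightarrow> e \<subseteq> V"
  by (auto simp: simple_graph_def)

lemma degree_ge_1_if_in_edge:
  assumes "simple_graph V E" "e \<in> E" "x \<in> e"
  shows "1 \<le> degree E x"
proof -
  have "{e \<in> E. x \<in> e} \<noteq> {}" using assms by auto
  with simple_graph_finite_edges[OF assms(1)] show ?thesis
    by (simp add: degree_def Suc_le_eq card_gt_0_iff)
qed

lemma degree_1_unique_edge:
  assumes "degree E u = 1" "{u, v} \<in> E" "e \<in> E" "u \<in> e"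
  shows "e = {u, v}"
proof -
  obtain a where a: "{e \<in> E. u \<in> e} = {a}"
    using assms(1) card_1_singletonE unfolding degree_def by blast
  have "e \<in> {e \<in> E. u \<in> e}" "{u, v} \<in> {e \<in> E. u \<in> e}" using assms(2-4) by auto
  then show ?thesis unfolding a by simp
qed

lemma connected_graph_closed_set:
  assumes "connected_graph V E" "u \<in> V" "v \<in> V" "u \<in> S"
    and closed: "\<And>x y. x \<in> S \<Longrightarrow> {x, y} \<in> E \<Longrightarrow> y \<in> S"
  shows "v \<in> S"
proof -
  have "(adjacent E)\<^sup>*\<^sup>* u v"
    using assms(1-3) by (simp add: connected_graph_def)
  then show ?thesis
    using \<open>u \<in> S\<close> by (induction rule: rtranclp_induct) (auto simp: adjacent_def closed)
qed

lemma connected_graph_degree_ge_1: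
  assumes sg: "simple_graph V E" and conn: "connected_graph V E"
    and "2 \<le> card V" and v: "v \<in> V"
  shows "1 \<le> degree E v"
proof (rule ccontr)
  assume "\<not> 1 \<le> degree E v"
  then have isolated: "\<And>y. {v, y} \<notin> E"
    using degree_ge_1_if_in_edge[OF sg] by blast
  obtain w where w: "w \<in> V" "w \<noteq> v"
    using \<open>2 \<le> card V\<close> v
    by (metis card_le_Suc0_iff_eq not_less_eq_eq numeral_2_eq_2 sg simple_graph_def)
  have "w \<in> {v}"
    using connected_graph_closed_set[OF conn v w(1)] isolated by auto
  with w show False by simp
qed

text \<open>Two adjacent leaves would form a whole component.\<close>

lemma connected_graph_no_edge_between_leaves:
  assumes sg: "simple_graph V E" and conn: "connected_graph V E" and "3 \<le> card V"
    and uv: "{u, v} \<in> E" and "degree E u = 1" "degree E v = 1"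
  shows False
proof -
  have vu: "{v, u} \<in> E" using uv by (simp add: insert_commute)
  have "u \<in> V" "u \<noteq> v" using uv sg by (auto simp: simple_graph_def doubleton_eq_iff)
  have "card {u, v} \<le> 2" by (simp add: card_insert_if)
  then have "\<not> V \<subseteq> {u, v}"
    using \<open>3 \<le> card V\<close> card_mono[of "{u, v}" V] by auto
  then obtain w where w: "w \<in> V" "w \<notin> {u, v}" by blast
  have "w \<in> {u, v}"
  proof (rule connected_graph_closed_set[OF conn \<open>u \<in> V\<close> w(1)])
    fix x y assume "x \<in> {u, v}" "{x, y} \<in> E"
    then show "y \<in> {u, v}"
      using degree_1_unique_edge[OF \<open>degree E u = 1\<close> uv] degree_1_unique_edge[OF \<open>degree E v = 1\<close> vu]
      by (auto simp: doubleton_eq_iff)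
  qed simp
  with w show False by simp
qed

lemma sum_edges_sum_endpoints:
  fixes h :: "'a \<Rightarrow> 'b::comm_semiring_1"
  assumes sg: "simple_graph V E"
  shows "(\<Sum>e\<in>E. \<Sum>x\<in>e. h x) = (\<Sum>v\<in>V. of_nat (degree E v) * h v)"
proof -
  have fV: "finite V" using sg by (simp add: simple_graph_def)
  have "(\<Sum>e\<in>E. \<Sum>x\<in>e. h x) = (\<Sum>e\<in>E. \<Sum>v\<in>V. if v \<in> e then h v else 0)"
  proof (rule sum.cong)
    fix e assume "e \<in> E"
    then have "{v \<in> V. v \<in> e} = e" using sg by (auto simp: simple_graph_def)
    then show "(\<Sum>x\<in>e. h x) = (\<Sum>v\<in>V. if v \<in> e then h v else 0)"
      using sum.inter_filter[OF fV, of h "\<lambda>v. v \<in> e"] by simp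
  qed simp
  also have "\<dots> = (\<Sum>v\<in>V. \<Sum>e\<in>E. if v \<in> e then h v else 0)"
    by (rule sum.swap)
  also have "\<dots> = (\<Sum>v\<in>V. of_nat (degree E v) * h v)"
  proof (rule sum.cong[OF refl])
    fix v
    show "(\<Sum>e\<in>E. if v \<in> e then h v else 0) = of_nat (degree E v) * h v"
      using sum.inter_filter[OF simple_graph_finite_edges[OF sg], of "\<lambda>_. h v" "\<lambda>e. v \<in> e"]
      by (simp add: degree_def)
  qed
  finally show ?thesis .
qed

definition degree_pair :: "'a set set \<Rightarrow> 'a set \<Rightarrow> nat \<times> nat" where
  "degree_pair E e = (Min (degree E ` e), Max (degree E ` e))"

definition degree_pairs :: "nat \<Rightarrow> (nat \<times> nat) set" where
  "degree_pairs k = {(i, j). 1 \<le> i \<and> i \<le> j \<and> j \<le> k}"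

lemma degree_pair_doubleton:
  "degree_pair E {u, v} = (min (degree E u) (degree E v), max (degree E u) (degree E v))"
  by (simp add: degree_pair_def)

lemma finite_degree_pairs: "finite (degree_pairs k)"
  by (rule finite_subset[of _ "{..k} \<times> {..k}"]) (auto simp: degree_pairs_def)

lemma degree_pairs_4:
  "degree_pairs 4 = {(1,1), (1,2), (1,3), (1,4), (2,2), (2,3), (2,4), (3,3), (3,4), (4,4)}"
  (is "_ = ?P")
proof (intro set_eqI iffI)
  fix p assume "p \<in> degree_pairs 4"
  then obtain i j where p: "p = (i, j)" and "1 \<le> i" "i \<le> j" "j \<le> 4"
    by (auto simp: degree_pairs_def)
  then consider "j = 1" | "j = 2" | "j = 3" | "j = 4" by linarith
  then show "p \<in> ?P"
    using \<open>1 \<le> i\<close> \<open>i \<le> j\<close> unfolding p by cases (simp_all add: le_Suc_eq numeral_eq_Suc)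
qed (auto simp: degree_pairs_def)

lemma m_profile_iff: "m_profile E f \<longleftrightarrow> (\<forall>(i, j)\<in>degree_pairs 4. me E i j = f (i, j))"
  by (auto simp: m_profile_def degree_pairs_def)

lemma me_eq_card_degree_pair:
  assumes sg: "simple_graph V E" and "i \<le> j"
  shows "me E i j = card {e \<in> E. degree_pair E e = (i, j)}"
  unfolding me_def
proof (intro arg_cong[where f = card] Collect_cong conj_cong refl)
  fix e assume "e \<in> E"
  then obtain a b where e: "e = {a, b}" "a \<noteq> b"
    using sg by (blast elim: simple_graph_edgeE)
  show "(\<exists>u v. e = {u, v} \<and> u \<noteq> v \<and> degree E u = i \<and> degree E v = j)
        \<longleftrightarrow> degree_pair E e = (i, j)"
    using \<open>i \<le> j\<close> e by (auto simp: degree_pair_doubleton doubleton_eq_iff min_def max_def)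
qed

lemma degree_pair_in_degree_pairs:
  assumes sg: "simple_graph V E" and maxdeg: "\<forall>v\<in>V. degree E v \<le> k" and "e \<in> E"
  shows "degree_pair E e \<in> degree_pairs k"
proof -
  obtain u v where e: "e = {u, v}" "u \<in> V" "v \<in> V"
    using sg \<open>e \<in> E\<close> by (blast elim: simple_graph_edgeE)
  have "1 \<le> degree E u" "1 \<le> degree E v" "degree E u \<le> k" "degree E v \<le> k"
    using degree_ge_1_if_in_edge[OF sg \<open>e \<in> E\<close>] e maxdeg by auto
  then show ?thesis
    unfolding e(1) degree_pair_doubleton degree_pairs_def by simp
qed

lemma sum_edges_by_degree_pair:
  fixes Q :: "'a set \<Rightarrow> 'b::comm_semiring_1"
  assumes sg: "simple_graph V E" and maxdeg: "\<forall>v\<in>V. degree E v \<le> k"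
    and Q: "\<And>u v. {u, v} \<in> E \<Longrightarrow> u \<noteq> v \<Longrightarrow> Q {u, v} = q (degree E u) (degree E v)"
  shows "(\<Sum>e\<in>E. Q e) = (\<Sum>(i, j)\<in>degree_pairs k. of_nat (me E i j) * q i j)"
proof -
  have "(\<Sum>e\<in>E. Q e) = (\<Sum>p\<in>degree_pairs k. \<Sum>e\<in>{e \<in> E. degree_pair E e = p}. Q e)"
    using degree_pair_in_degree_pairs[OF sg maxdeg]
    by (intro sum.group[symmetric] simple_graph_finite_edges[OF sg] finite_degree_pairs) auto
  also have "\<dots> = (\<Sum>(i, j)\<in>degree_pairs k. of_nat (me E i j) * q i j)"
  proof (intro sum.cong refl, clarify)
    fix i j assume "(i, j) \<in> degree_pairs k"
    then have "i \<le> j" by (simp add: degree_pairs_def)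
    have "Q e = q i j" if "e \<in> E" "degree_pair E e = (i, j)" for e
    proof -
      obtain u v where e: "e = {u, v}" "u \<noteq> v"
        using sg \<open>e \<in> E\<close> by (blast elim: simple_graph_edgeE)
      have "Q e = q (degree E u) (degree E v)" "Q e = q (degree E v) (degree E u)"
        using Q[of u v] Q[of v u] e \<open>e \<in> E\<close> by (auto simp: insert_commute)
      then show ?thesis
        using that(2) e by (auto simp: degree_pair_doubleton min_def max_def split: if_splits)
    qed
    then show "(\<Sum>e\<in>{e \<in> E. degree_pair E e = (i, j)}. Q e) = of_nat (me E i j) * q i j"
      by (simp add: me_eq_card_degree_pair[OF sg \<open>i \<le> j\<close>])
  qed
  finally show ?thesis .
qed

lemma card_edges_by_degree_pair:
  assumes "simple_graph V E" "\<forall>v\<in>V. degree E v \<le> k"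
  shows "card E = (\<Sum>(i, j)\<in>degree_pairs k. me E i j)"
  using sum_edges_by_degree_pair[OF assms, of "\<lambda>_. 1::nat" "\<lambda>_ _. 1"]
  by (simp add: case_prod_beta)

lemma nv_handshake_by_degree_pair:
  assumes sg: "simple_graph V E" and maxdeg: "\<forall>v\<in>V. degree E v \<le> k"
  shows "d * nv V E d = (\<Sum>(i, j)\<in>degree_pairs k. me E i j * (of_bool (i = d) + of_bool (j = d)))"
proof -
  have fV: "finite V" using sg by (simp add: simple_graph_def)
  have "d * nv V E d = (\<Sum>v\<in>V. if degree E v = d then d else 0)"
    using sum.inter_filter[OF fV, of "\<lambda>_. d" "\<lambda>v. degree E v = d"]
    by (simp add: nv_def mult.commute)
  also have "\<dots> = (\<Sum>v\<in>V. degree E v * of_bool (degree E v = d))"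
    by (rule sum.cong) auto
  also have "\<dots> = (\<Sum>e\<in>E. \<Sum>x\<in>e. of_bool (degree E x = d))"
    using sum_edges_sum_endpoints[OF sg, of "\<lambda>x. of_bool (degree E x = d) :: nat"] by simp
  also have "\<dots> = (\<Sum>(i, j)\<in>degree_pairs k. of_nat (me E i j) * (of_bool (i = d) + of_bool (j = d)))"
    by (rule sum_edges_by_degree_pair[OF sg maxdeg]) simp
  finally show ?thesis by simp
qed

lemma card_vertices_by_degree:
  assumes sg: "simple_graph V E" and "connected_graph V E" "2 \<le> card V"
    and "\<forall>v\<in>V. degree E v \<le> k"
  shows "card V = (\<Sum>d = 1..k. nv V E d)"
proof -
  have "degree E ` V \<subseteq> {1..k}"
    using connected_graph_degree_ge_1[OF assms(1-3)] assms(4) by auto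
  then have "(\<Sum>d = 1..k. \<Sum>v\<in>{v \<in> V. degree E v = d}. 1) = (\<Sum>v\<in>V. 1::nat)"
    using sg by (intro sum.group) (auto simp: simple_graph_def)
  then show ?thesis by (simp add: nv_def)
qed

lemma sombor_by_degree_pair:
  assumes "simple_graph V E" "\<forall>v\<in>V. degree E v \<le> k"
  shows "sombor E = (\<Sum>(i, j)\<in>degree_pairs k. me E i j * sqrt (real i ^ 2 + real j ^ 2))"
  unfolding sombor_def by (rule sum_edges_by_degree_pair[OF assms]) simp

lemma me_diag_le_choose:
  assumes sg: "simple_graph V E"
  shows "me E k k \<le> nv V E k choose 2"
proof -
  have fV: "finite V" using sg by (simp add: simple_graph_def)
  have "{e \<in> E. \<exists>u v. e = {u, v} \<and> u \<noteq> v \<and> degree E u = k \<and> degree E v = k}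
      \<subseteq> {B. B \<subseteq> {v \<in> V. degree E v = k} \<and> card B = 2}"
    using simple_graph_edge_subset[OF sg] by fastforce
  then have "me E k k \<le> card {B. B \<subseteq> {v \<in> V. degree E v = k} \<and> card B = 2}"
    unfolding me_def by (rule card_mono[rotated]) (simp add: fV)
  also have "\<dots> = nv V E k choose 2"
    by (simp add: n_subsets fV nv_def)
  finally show ?thesis .
qed

lemma sqrt_square_mult: "0 \<le> a \<Longrightarrow> sqrt (a\<^sup>2 * b) = a * sqrt b"
  by (simp add: real_sqrt_mult)

lemma sombor_chemical:
  assumes "simple_graph V E" "\<forall>v\<in>V. degree E v \<le> 4"
  shows "sombor E = me E 1 1 * sqrt 2 + me E 1 2 * sqrt 5 + me E 1 3 * sqrt 10
    + me E 1 4 * sqrt 17 + me E 2 2 * (2 * sqrt 2) + me E 2 3 * sqrt 13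
    + me E 2 4 * (2 * sqrt 5) + me E 3 3 * (3 * sqrt 2) + me E 3 4 * 5 + me E 4 4 * (4 * sqrt 2)"
proof -
  have "sqrt 8 = 2 * sqrt 2" "sqrt 18 = 3 * sqrt 2" "sqrt 32 = 4 * sqrt 2" "sqrt 20 = 2 * sqrt 5"
    "sqrt 25 = 5"
    using sqrt_square_mult[of 2 2] sqrt_square_mult[of 3 2] sqrt_square_mult[of 4 2]
      sqrt_square_mult[of 2 5] sqrt_square_mult[of 5 1]
    by simp_all
  then show ?thesis
    using sombor_by_degree_pair[OF assms] by (simp add: degree_pairs_4)
qed

lemma chemical_bicyclic_degree_equations:
  assumes cb: "chemical_bicyclic n V E" and "3 \<le> n"
  shows "me E 1 1 = 0"
    and "nv V E 1 = me E 1 2 + me E 1 3 + me E 1 4"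
    and "2 * nv V E 2 = me E 1 2 + 2 * me E 2 2 + me E 2 3 + me E 2 4"
    and "3 * nv V E 3 = me E 1 3 + me E 2 3 + 2 * me E 3 3 + me E 3 4"
    and "4 * nv V E 4 = me E 1 4 + me E 2 4 + me E 3 4 + 2 * me E 4 4"
    and "n = nv V E 1 + nv V E 2 + nv V E 3 + nv V E 4"
    and "n + 1 = me E 1 2 + me E 1 3 + me E 1 4 + me E 2 2 + me E 2 3 + me E 2 4
                 + me E 3 3 + me E 3 4 + me E 4 4"
proof -
  have sg: "simple_graph V E" and conn: "connected_graph V E" and "card V = n"
    and "card E = n + 1" and maxdeg: "\<forall>v\<in>V. degree E v \<le> 4"
    using cb by (auto simp: chemical_bicyclic_def)
  have "3 \<le> card V" using \<open>card V = n\<close> \<open>3 \<le> n\<close> by simp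
  then have no_leaf_edges:
    "{e \<in> E. \<exists>u v. e = {u, v} \<and> u \<noteq> v \<and> degree E u = 1 \<and> degree E v = 1} = {}"
    using connected_graph_no_edge_between_leaves[OF sg conn] by blast
  show m11: "me E 1 1 = 0"
    unfolding me_def no_leaf_edges by simp
  note incidences = nv_handshake_by_degree_pair[OF sg maxdeg, unfolded degree_pairs_4]
  show "nv V E 1 = me E 1 2 + me E 1 3 + me E 1 4"
    using incidences[of 1] m11 by simp
  show "2 * nv V E 2 = me E 1 2 + 2 * me E 2 2 + me E 2 3 + me E 2 4"
    using incidences[of 2] by simp
  show "3 * nv V E 3 = me E 1 3 + me E 2 3 + 2 * me E 3 3 + me E 3 4"
    using incidences[of 3] by simp
  show "4 * nv V E 4 = me E 1 4 + me E 2 4 + me E 3 4 + 2 * me E 4 4"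
    using incidences[of 4] by simp
  have "{1..4::nat} = {1, 2, 3, 4}" by auto
  then show "n = nv V E 1 + nv V E 2 + nv V E 3 + nv V E 4"
    using card_vertices_by_degree[OF sg conn _ maxdeg] \<open>card V = n\<close> \<open>3 \<le> n\<close> by simp
  show "n + 1 = me E 1 2 + me E 1 3 + me E 1 4 + me E 2 2 + me E 2 3 + me E 2 4
                 + me E 3 3 + me E 3 4 + me E 4 4"
    using card_edges_by_degree_pair[OF sg maxdeg] \<open>card E = n + 1\<close> m11
    by (simp add: degree_pairs_4)
qed

lemma sombor_beta2:
  assumes "beta2 n V E" "4 \<le> n"
  shows "sombor E = 2 * sqrt 2 * (real n + 1) + (4 * sqrt 13 - 7 * sqrt 2)"
  using assms sombor_chemical[of V E]
  by (auto simp: beta2_def chemical_bicyclic_def m_profile_iff degree_pairs_4 of_nat_diff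
      algebra_simps)

lemma sombor_beta3:
  assumes "beta3 n V E" "5 \<le> n"
  shows "sombor E = 2 * sqrt 2 * (real n + 1) + (6 * sqrt 13 - 12 * sqrt 2)"
  using assms sombor_chemical[of V E]
  by (auto simp: beta3_def chemical_bicyclic_def m_profile_iff degree_pairs_4 of_nat_diff
      algebra_simps)

lemma sombor_beta9:
  assumes "beta9 n V E" "6 \<le> n"
  shows "sombor E = 2 * sqrt 2 * (real n + 1) + (sqrt 5 + 3 * sqrt 13 - 5 * sqrt 2)"
  using assms sombor_chemical[of V E]
  by (auto simp: beta9_def chemical_bicyclic_def m_profile_iff degree_pairs_4 of_nat_diff
      algebra_simps)

lemma sqrt_numeric_bounds:
  "1414213 / 1000000 < sqrt 2" "sqrt 2 < 1414214 / 1000000"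
  "2236067 / 1000000 < sqrt 5" "sqrt 5 < 2236068 / 1000000"
  "3162277 / 1000000 < sqrt 10" "3605551 / 1000000 < sqrt 13" "sqrt 13 < 3605552 / 1000000"
  "4123105 / 1000000 < sqrt 17"
  by (rule real_less_rsqrt real_less_lsqrt; simp add: power2_eq_square)+

lemma sombor_excess_ge_linear:
  fixes m12 m13 m14 m23 m24 m33 m34 m44 :: nat
  shows "- 5924 / 10000 * m12 + 3338 / 10000 * m13 + 12946 / 10000 * m14 + 7771 / 10000 * m23
      + 16437 / 10000 * m24 + 14142 / 10000 * m33 + 21715 / 10000 * m34 + 28284 / 10000 * m44
    \<le> m12 * (sqrt 5 - 2 * sqrt 2) + m13 * (sqrt 10 - 2 * sqrt 2) + m14 * (sqrt 17 - 2 * sqrt 2)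
      + m23 * (sqrt 13 - 2 * sqrt 2) + m24 * (2 * sqrt 5 - 2 * sqrt 2) + m33 * sqrt 2
      + m34 * (5 - 2 * sqrt 2) + m44 * (2 * sqrt 2)"
proof -
  have "m12 * (- 5924 / 10000) \<le> m12 * (sqrt 5 - 2 * sqrt 2)"
    "m13 * (3338 / 10000) \<le> m13 * (sqrt 10 - 2 * sqrt 2)"
    "m14 * (12946 / 10000) \<le> m14 * (sqrt 17 - 2 * sqrt 2)"
    "m23 * (7771 / 10000) \<le> m23 * (sqrt 13 - 2 * sqrt 2)"
    "m24 * (16437 / 10000) \<le> m24 * (2 * sqrt 5 - 2 * sqrt 2)"
    "m33 * (14142 / 10000) \<le> m33 * sqrt 2"
    "m34 * (21715 / 10000) \<le> m34 * (5 - 2 * sqrt 2)"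
    "m44 * (28284 / 10000) \<le> m44 * (2 * sqrt 2)"
    using sqrt_numeric_bounds by (intro mult_left_mono; linarith)+
  then show ?thesis by linarith
qed

text \<open>m_{1,1} and m_{2,2} do not occur: m_{1,1} = 0 in a connected graph with n >= 3, and the
  coefficient of m_{2,2} is sqrt(2^2 + 2^2) - 2 sqrt 2 = 0.\<close>

lemma sombor_excess_lower_bound:
  fixes m12 m13 m14 m23 m24 m33 m34 m44 n1 n3 n4 :: nat
  assumes leaves: "n1 = m12 + m13 + m14"
    and cubic: "3 * n3 = m13 + m23 + 2 * m33 + m34"
    and quartic: "4 * n4 = m14 + m24 + m34 + 2 * m44"
    and bicyclic: "n3 + 2 * n4 = n1 + 2"
    and m33: "m33 \<le> n3 choose 2" and m44: "m44 \<le> n4 choose 2"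
    and not_two_cubic: "\<not> (n4 = 0 \<and> n3 = 2)"
    and not_beta9: "\<not> (n4 = 0 \<and> n3 = 3 \<and> m33 = 3 \<and> m13 = 0)"
  shows "sqrt 5 + 3 * sqrt 13 - 5 * sqrt 2 < m12 * (sqrt 5 - 2 * sqrt 2)
    + m13 * (sqrt 10 - 2 * sqrt 2) + m14 * (sqrt 17 - 2 * sqrt 2) + m23 * (sqrt 13 - 2 * sqrt 2)
    + m24 * (2 * sqrt 5 - 2 * sqrt 2) + m33 * sqrt 2 + m34 * (5 - 2 * sqrt 2) + m44 * (2 * sqrt 2)"
proof -
  have target: "sqrt 5 + 3 * sqrt 13 - 5 * sqrt 2 < 59817 / 10000"
    using sqrt_numeric_bounds by linarith
  have real_equations:
    "real n1 = m12 + m13 + m14" "3 * real n3 = m13 + m23 + 2 * m33 + m34"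
    "4 * real n4 = m14 + m24 + m34 + 2 * m44" "real n3 + 2 * real n4 = real n1 + 2"
    using arg_cong[OF leaves, of real] arg_cong[OF cubic, of real] arg_cong[OF quartic, of real]
      arg_cong[OF bicyclic, of real]
    by simp_all
  note linear = target real_equations of_nat_0_le_iff
    sombor_excess_ge_linear[of m12 m13 m14 m23 m24 m33 m34 m44]
  show ?thesis
  proof (cases "n4 = 0")
    case False
    then consider "2 \<le> n4" | "n4 = 1" by linarith
    then show ?thesis
    proof cases
      case 1
      then have "2 \<le> real n4" by simp
      with linear show ?thesis by linarith
    next
      case 2
      then have "real n4 = 1" "real m44 = 0" using m44 by (simp_all add: choose_two)
      with linear show ?thesis by linarith
    qed
  next
    case True
    then have "n3 \<noteq> 2" "2 \<le> n3" using not_two_cubic bicyclic by simp_all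
    then consider "4 \<le> n3" | "n3 = 3" by linarith
    then show ?thesis
    proof cases
      case 1
      then have "real n4 = 0" "4 \<le> real n3" using True by simp_all
      with linear show ?thesis by linarith
    next
      case 2
      then have "m33 \<le> 3" "m33 \<noteq> 3 \<or> m13 \<noteq> 0"
        using m33 not_beta9 True by (simp_all add: choose_two)
      then consider "m33 \<le> 2" | "1 \<le> m13" by linarith
      then show ?thesis
      proof cases
        case 1
        then have "real n4 = 0" "real n3 = 3" "real m33 \<le> 2" using True \<open>n3 = 3\<close> by simp_all
        with linear show ?thesis by linarith
      next
        case 2
        then have "real n4 = 0" "real n3 = 3" "real m33 \<le> 3" "1 \<le> real m13"
          using True \<open>n3 = 3\<close> \<open>m33 \<le> 3\<close> by simp_all
        with linear show ?thesis by linarith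
      qed
    qed
  qed
qed

lemma beta2_or_beta3_if_two_cubic:
  assumes cb: "chemical_bicyclic n V E" and "6 \<le> n" and "nv V E 4 = 0" "nv V E 3 = 2"
  shows "beta2 n V E \<or> beta3 n V E"
proof -
  have sg: "simple_graph V E" using cb by (simp add: chemical_bicyclic_def)
  have "3 \<le> n" using \<open>6 \<le> n\<close> by simp
  note eqs = chemical_bicyclic_degree_equations[OF cb this]
  have "me E 3 3 \<le> 1" using me_diag_le_choose[OF sg, of 3] \<open>nv V E 3 = 2\<close> by simp
  then consider "me E 3 3 = 0" | "me E 3 3 = 1" by linarith
  then show ?thesis
  proof cases
    case 1
    with eqs assms have "beta3 n V E"
      by (simp add: beta3_def m_profile_iff degree_pairs_4)
    then show ?thesis ..
  next
    case 2
    with eqs assms have "beta2 n V E"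
      by (simp add: beta2_def m_profile_iff degree_pairs_4)
    then show ?thesis ..
  qed
qed

lemma beta9_if_cubic_triangle:
  assumes cb: "chemical_bicyclic n V E" and "6 \<le> n"
    and "nv V E 4 = 0" "nv V E 3 = 3" "me E 3 3 = 3" "me E 1 3 = 0"
  shows "beta9 n V E"
proof -
  have "3 \<le> n" using \<open>6 \<le> n\<close> by simp
  with assms show ?thesis
    using chemical_bicyclic_degree_equations[OF cb \<open>3 \<le> n\<close>]
    by (simp add: beta9_def m_profile_iff degree_pairs_4)
qed

lemma sombor_gt_beta9_value:
  assumes cb: "chemical_bicyclic n V E" and "6 \<le> n"
    and "\<not> beta2 n V E" "\<not> beta3 n V E" "\<not> beta9 n V E"
  shows "2 * sqrt 2 * (real n + 1) + (sqrt 5 + 3 * sqrt 13 - 5 * sqrt 2) < sombor E"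
proof -
  have "3 \<le> n" using \<open>6 \<le> n\<close> by simp
  note eqs = chemical_bicyclic_degree_equations[OF cb this]
  have sg: "simple_graph V E" and maxdeg: "\<forall>v\<in>V. degree E v \<le> 4"
    using cb by (auto simp: chemical_bicyclic_def)
  have "sqrt 5 + 3 * sqrt 13 - 5 * sqrt 2 < me E 1 2 * (sqrt 5 - 2 * sqrt 2)
    + me E 1 3 * (sqrt 10 - 2 * sqrt 2) + me E 1 4 * (sqrt 17 - 2 * sqrt 2)
    + me E 2 3 * (sqrt 13 - 2 * sqrt 2) + me E 2 4 * (2 * sqrt 5 - 2 * sqrt 2)
    + me E 3 3 * sqrt 2 + me E 3 4 * (5 - 2 * sqrt 2) + me E 4 4 * (2 * sqrt 2)"
    (is "_ < ?excess")
  proof (rule sombor_excess_lower_bound)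
    show "nv V E 3 + 2 * nv V E 4 = nv V E 1 + 2"
      using eqs \<open>6 \<le> n\<close> by linarith
    show "\<not> (nv V E 4 = 0 \<and> nv V E 3 = 2)"
      using beta2_or_beta3_if_two_cubic[OF cb \<open>6 \<le> n\<close>] assms(3,4) by blast
    show "\<not> (nv V E 4 = 0 \<and> nv V E 3 = 3 \<and> me E 3 3 = 3 \<and> me E 1 3 = 0)"
      using beta9_if_cubic_triangle[OF cb \<open>6 \<le> n\<close>] assms(5) by blast
  qed (use eqs \<open>6 \<le> n\<close> me_diag_le_choose[OF sg] in simp_all)
  moreover have "sombor E = 2 * sqrt 2 * (real n + 1) + ?excess"
  proof -
    have "real n + 1 = me E 1 2 + me E 1 3 + me E 1 4 + me E 2 2 + me E 2 3 + me E 2 4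
                       + me E 3 3 + me E 3 4 + me E 4 4"
      using arg_cong[OF eqs(7), of real] \<open>6 \<le> n\<close> by simp
    then show ?thesis
      using sombor_chemical[OF sg maxdeg] eqs(1) \<open>6 \<le> n\<close> by (simp add: algebra_simps)
  qed
  ultimately show ?thesis by linarith
qed

theorem theorem3p9:
  fixes n :: nat
    and V1 V2 V3 V :: "'a set" and E1 E2 E3 E :: "'a set set"
  assumes "n \<ge> 6"
    and "beta2 n V1 E1" and "beta3 n V2 E2" and "beta9 n V3 E3"
    and "chemical_bicyclic n V E"
    and "\<not> beta2 n V E" and "\<not> beta3 n V E" and "\<not> beta9 n V E"
  shows "sombor E1 < sombor E2 \<and> sombor E2 < sombor E3 \<and> sombor E3 < sombor E"
proof -
  have "4 \<le> n" "5 \<le> n" using \<open>n \<ge> 6\<close> by simp_all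
  then show ?thesis
    using sombor_beta2[OF assms(2)] sombor_beta3[OF assms(3)] sombor_beta9[OF assms(4,1)]
      sombor_gt_beta9_value[OF assms(5,1,6-8)] sqrt_numeric_bounds
    by linarith
qed

end
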